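(* Let $\Re$ be a commutative Krasner hyperring with identity $1\ne0$, $\phi:L(\Re)\to L(\Re)\cup\{\emptyset\}$ a function, and $T$ a $\phi$-prime proper hyperideal of $\Re$. (i) If $M$ is a hyperideal of $\Re$ with $M\subseteq T$, then $T/M$ is a $\phi_M$-prime hyperideal of $\Re/M$. (ii) If $S$ is a multiplicatively closed subset of $\Re$ with $T\cap S=\emptyset$ and $\phi(T)_S\subseteq\phi_S(T_S)$, then $T_S$ is a $\phi_S$-prime hyperideal of $\Re_S$.
   Context: Krasner hyperring: $(\Re,\oplus)$ canonical hypergroup, $(\Re,\circ)$ commutative semigroup with identity $1\ne0$, $0$ absorbing, distributive. Hyperideals, $L(\Re)$ as usual. For a hyperideal $M$, $\Re/M=\{a\oplus M\}$ is the quotient Krasner hyperring, and for a hyperideal $N\supseteq M$, $N/M=\{a\oplus M: a\in N\}$; $\phi_M:L(\Re/M)\to L(\Re/M)\cup\{\emptyset\}$ is $\phi_M(N/M)=(\phi(N)\oplus M)/M$, and $\emptyset$ if $\phi(N)=\emptyset$. For multiplicatively closed $S$ ($1\in S$, closed under $\circ$), $\Re_S$ is the localization (fractions $a/s$), $N_S=\{a/s: a\in N,s\in S\}$; for $J\in L(\Re_S)$, $J\cap\Re=\{a\in\Re: a/1\in J\}$ and $\phi_S(J)=(\phi(J\cap\Re))_S$, with $\phi_S(J)=\emptyset$ if $\phi(J\cap\Re)=\emptyset$. A hyperideal $N$ is $\psi$-prime if $a\circ b\in N$, $a\circ b\notin\psi(N)$ imply $a\in N$ or $b\in N$. *)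

theory Defs
  imports Main
begin

record 'a hyperring =
  hcarrier :: "'a set"
  hadd :: "'a \<Rightarrow> 'a \<Rightarrow> 'a set"
  hmult :: "'a \<Rightarrow> 'a \<Rightarrow> 'a"
  hzero :: 'a
  hone :: 'a

definition hadd_set :: "('a, 'b) hyperring_scheme \<Rightarrow> 'a set \<Rightarrow> 'a set \<Rightarrow> 'a set" where
  "hadd_set R A B = (\<Union>a\<in>A. \<Union>b\<in>B. hadd R a b)"

definition hneg :: "('a, 'b) hyperring_scheme \<Rightarrow> 'a \<Rightarrow> 'a" where
  "hneg R a = (THE a'. a' \<in> hcarrier R \<and> hzero R \<in> hadd R a a')"

definition canonical_hypergroup :: "('a, 'b) hyperring_scheme \<Rightarrow> bool" where
  "canonical_hypergroup R \<longleftrightarrow>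
     (\<forall>a\<in>hcarrier R. \<forall>b\<in>hcarrier R. hadd R a b \<subseteq> hcarrier R \<and> hadd R a b \<noteq> {}) \<and>
     (\<forall>a\<in>hcarrier R. \<forall>b\<in>hcarrier R. \<forall>c\<in>hcarrier R.
        hadd_set R (hadd R a b) {c} = hadd_set R {a} (hadd R b c)) \<and>
     (\<forall>a\<in>hcarrier R. \<forall>b\<in>hcarrier R. hadd R a b = hadd R b a) \<and>
     hzero R \<in> hcarrier R \<and>
     (\<forall>a\<in>hcarrier R. hadd R a (hzero R) = {a}) \<and>
     (\<forall>a\<in>hcarrier R. \<exists>!a'. a' \<in> hcarrier R \<and> hzero R \<in> hadd R a a') \<and>
     (\<forall>a\<in>hcarrier R. \<forall>b\<in>hcarrier R. \<forall>c\<in>hcarrier R.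
        c \<in> hadd R a b \<longrightarrow> a \<in> hadd R c (hneg R b) \<and> b \<in> hadd R c (hneg R a))"

definition krasner_hyperring :: "('a, 'b) hyperring_scheme \<Rightarrow> bool" where
  "krasner_hyperring R \<longleftrightarrow>
     canonical_hypergroup R \<and>
     (\<forall>a\<in>hcarrier R. \<forall>b\<in>hcarrier R. hmult R a b \<in> hcarrier R) \<and>
     (\<forall>a\<in>hcarrier R. \<forall>b\<in>hcarrier R. \<forall>c\<in>hcarrier R.
        hmult R (hmult R a b) c = hmult R a (hmult R b c)) \<and>
     (\<forall>a\<in>hcarrier R. \<forall>b\<in>hcarrier R. hmult R a b = hmult R b a) \<and>
     hone R \<in> hcarrier R \<and>
     (\<forall>a\<in>hcarrier R. hmult R (hone R) a = a) \<and>
     hone R \<noteq> hzero R \<and>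
     (\<forall>a\<in>hcarrier R. hmult R (hzero R) a = hzero R) \<and>
     (\<forall>a\<in>hcarrier R. \<forall>b\<in>hcarrier R. \<forall>c\<in>hcarrier R.
        hmult R a ` hadd R b c = hadd R (hmult R a b) (hmult R a c))"

definition hyperideal :: "('a, 'b) hyperring_scheme \<Rightarrow> 'a set \<Rightarrow> bool" where
  "hyperideal R N \<longleftrightarrow>
     N \<subseteq> hcarrier R \<and> N \<noteq> {} \<and>
     (\<forall>a\<in>N. \<forall>b\<in>N. hadd R a (hneg R b) \<subseteq> N) \<and>
     (\<forall>r\<in>hcarrier R. \<forall>a\<in>N. hmult R r a \<in> N)"

definition phi_prime :: "('a, 'b) hyperring_scheme \<Rightarrow> ('a set \<Rightarrow> 'a set) \<Rightarrow> 'a set \<Rightarrow> bool" where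
  "phi_prime R \<psi> N \<longleftrightarrow>
     hyperideal R N \<and>
     (\<forall>a\<in>hcarrier R. \<forall>b\<in>hcarrier R.
        hmult R a b \<in> N \<and> hmult R a b \<notin> \<psi> N \<longrightarrow> a \<in> N \<or> b \<in> N)"

definition phi_function :: "('a, 'b) hyperring_scheme \<Rightarrow> ('a set \<Rightarrow> 'a set) \<Rightarrow> bool" where
  "phi_function R \<phi> \<longleftrightarrow> (\<forall>N. hyperideal R N \<longrightarrow> \<phi> N = {} \<or> hyperideal R (\<phi> N))"

definition coset :: "('a, 'b) hyperring_scheme \<Rightarrow> 'a set \<Rightarrow> 'a \<Rightarrow> 'a set" where
  "coset R M a = hadd_set R {a} M"

definition quot :: "('a, 'b) hyperring_scheme \<Rightarrow> 'a set \<Rightarrow> 'a set hyperring" where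
  "quot R M =
     \<lparr> hcarrier = coset R M ` hcarrier R,
       hadd = (\<lambda>X Y. {coset R M c | c a b. a \<in> hcarrier R \<and> b \<in> hcarrier R \<and>
                         X = coset R M a \<and> Y = coset R M b \<and> c \<in> hadd R a b}),
       hmult = (\<lambda>X Y. THE Z. \<exists>a b. a \<in> hcarrier R \<and> b \<in> hcarrier R \<and>
                         X = coset R M a \<and> Y = coset R M b \<and> Z = coset R M (hmult R a b)),
       hzero = coset R M (hzero R),
       hone = coset R M (hone R) \<rparr>"

definition quot_ideal :: "('a, 'b) hyperring_scheme \<Rightarrow> 'a set \<Rightarrow> 'a set \<Rightarrow> 'a set set" where
  "quot_ideal R N M = coset R M ` N"

text \<open>phi_M(N/M) = (phi(N) \<oplus> M)/M, where N is the hyperideal of R corresponding to N/M.\<close>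
definition phi_quot :: "('a, 'b) hyperring_scheme \<Rightarrow> ('a set \<Rightarrow> 'a set) \<Rightarrow> 'a set \<Rightarrow> 'a set set \<Rightarrow> 'a set set" where
  "phi_quot R \<phi> M J =
     (let N = {a \<in> hcarrier R. coset R M a \<in> J} in
      if \<phi> N = {} then {} else quot_ideal R (hadd_set R (\<phi> N) M) M)"

definition mult_closed :: "('a, 'b) hyperring_scheme \<Rightarrow> 'a set \<Rightarrow> bool" where
  "mult_closed R S \<longleftrightarrow> S \<subseteq> hcarrier R \<and> hone R \<in> S \<and>
     (\<forall>s\<in>S. \<forall>t\<in>S. hmult R s t \<in> S)"

text \<open>the fraction a/s: the class of (a,s) under (a,s) ~ (b,t) iff u a t = u b s for some u in S\<close>
definition frac :: "('a, 'b) hyperring_scheme \<Rightarrow> 'a set \<Rightarrow> 'a \<Rightarrow> 'a \<Rightarrow> ('a \<times> 'a) set" where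
  "frac R S a s = {(b, t). b \<in> hcarrier R \<and> t \<in> S \<and>
      (\<exists>u\<in>S. hmult R u (hmult R a t) = hmult R u (hmult R b s))}"

definition localization :: "('a, 'b) hyperring_scheme \<Rightarrow> 'a set \<Rightarrow> ('a \<times> 'a) set hyperring" where
  "localization R S =
     \<lparr> hcarrier = {frac R S a s | a s. a \<in> hcarrier R \<and> s \<in> S},
       hadd = (\<lambda>X Y. {frac R S c (hmult R s t) | c a b s t.
                  a \<in> hcarrier R \<and> b \<in> hcarrier R \<and> s \<in> S \<and> t \<in> S \<and>
                  X = frac R S a s \<and> Y = frac R S b t \<and>
                  c \<in> hadd R (hmult R a t) (hmult R b s)}),
       hmult = (\<lambda>X Y. THE Z. \<exists>a b s t.
                  a \<in> hcarrier R \<and> b \<in> hcarrier R \<and> s \<in> S \<and> t \<in> S \<and>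
                  X = frac R S a s \<and> Y = frac R S b t \<and>
                  Z = frac R S (hmult R a b) (hmult R s t)),
       hzero = frac R S (hzero R) (hone R),
       hone = frac R S (hone R) (hone R) \<rparr>"

definition loc_ideal :: "('a, 'b) hyperring_scheme \<Rightarrow> 'a set \<Rightarrow> 'a set \<Rightarrow> ('a \<times> 'a) set set" where
  "loc_ideal R S N = {frac R S a s | a s. a \<in> N \<and> s \<in> S}"

definition contraction :: "('a, 'b) hyperring_scheme \<Rightarrow> 'a set \<Rightarrow> ('a \<times> 'a) set set \<Rightarrow> 'a set" where
  "contraction R S J = {a \<in> hcarrier R. frac R S a (hone R) \<in> J}"

definition phi_loc :: "('a, 'b) hyperring_scheme \<Rightarrow> ('a set \<Rightarrow> 'a set) \<Rightarrow> 'a set \<Rightarrow> ('a \<times> 'a) set set \<Rightarrow> ('a \<times> 'a) set set" where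
  "phi_loc R \<phi> S J =
     (if \<phi> (contraction R S J) = {} then {} else loc_ideal R S (\<phi> (contraction R S J)))"

end

theory Submission
  imports Defs
begin

text \<open>
  Membership in the image of T can be read off representatives: as M \<subseteq> T, a coset a \<oplus> M lies
  in T/M iff a \<in> T, and a fraction a/s lies in T_S iff u \<circ> a \<in> T for some u \<in> S. So if a
  product of two classes lies in the image of T but not in that of \<phi>(T), some product of
  representatives lies in T but not in \<phi>(T), and \<phi>-primeness of T applies. In the localization
  this product is u \<circ> (a \<circ> b); the factor u is cancelled because u \<notin> T, as T \<inter> S = \<emptyset>, while
  u \<circ> (a \<circ> b) \<notin> \<phi>(T) forces a \<circ> b \<notin> \<phi>(T), as \<phi>(T) is empty or a hyperideal.
\<close>

lemma hneg_eqI: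
  assumes "x' \<in> hcarrier R" and "hzero R \<in> hadd R x x'"
    and "\<And>y. y \<in> hcarrier R \<Longrightarrow> hzero R \<in> hadd R x y \<Longrightarrow> y = x'"
  shows "hneg R x = x'"
  unfolding hneg_def using assms by (blast intro: the_equality)

lemma hyperidealI:
  assumes "N \<subseteq> hcarrier R" and "N \<noteq> {}"
    and "\<And>a b. a \<in> N \<Longrightarrow> b \<in> N \<Longrightarrow> hadd R a b \<subseteq> N"
    and "\<And>b. b \<in> N \<Longrightarrow> hneg R b \<in> N"
    and "\<And>r a. r \<in> hcarrier R \<Longrightarrow> a \<in> N \<Longrightarrow> hmult R r a \<in> N"
  shows "hyperideal R N"
  using assms unfolding hyperideal_def by blast

lemma quot_carrier [simp]: "hcarrier (quot R M) = coset R M ` hcarrier R"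
  and quot_zero [simp]: "hzero (quot R M) = coset R M (hzero R)"
  and quot_add: "hadd (quot R M) X Y = {coset R M c | c a b. a \<in> hcarrier R \<and> b \<in> hcarrier R \<and>
     X = coset R M a \<and> Y = coset R M b \<and> c \<in> hadd R a b}"
  by (simp_all add: quot_def)

lemma loc_carrier [simp]:
    "hcarrier (localization R S) = {frac R S a s | a s. a \<in> hcarrier R \<and> s \<in> S}"
  and loc_zero [simp]: "hzero (localization R S) = frac R S (hzero R) (hone R)"
  and loc_add: "hadd (localization R S) X Y = {frac R S c (hmult R s t) | c a b s t.
     a \<in> hcarrier R \<and> b \<in> hcarrier R \<and> s \<in> S \<and> t \<in> S \<and> X = frac R S a s \<and> Y = frac R S b t \<and>
     c \<in> hadd R (hmult R a t) (hmult R b s)}"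
  by (simp_all add: localization_def)

locale krasner =
  fixes R :: "('a, 'b) hyperring_scheme"
  assumes krasner: "krasner_hyperring R"
begin

lemma canonical: "canonical_hypergroup R"
  using krasner by (auto simp: krasner_hyperring_def)

lemma add_closed: "a \<in> hcarrier R \<Longrightarrow> b \<in> hcarrier R \<Longrightarrow> c \<in> hadd R a b \<Longrightarrow> c \<in> hcarrier R"
  using canonical by (auto simp: canonical_hypergroup_def)

lemma add_assoc:
  "a \<in> hcarrier R \<Longrightarrow> b \<in> hcarrier R \<Longrightarrow> c \<in> hcarrier R \<Longrightarrow>
    (\<Union>x\<in>hadd R a b. hadd R x c) = (\<Union>y\<in>hadd R b c. hadd R a y)"
  using canonical unfolding canonical_hypergroup_def hadd_set_def by simp

lemma add_comm: "a \<in> hcarrier R \<Longrightarrow> b \<in> hcarrier R \<Longrightarrow> hadd R a b = hadd R b a"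
  using canonical by (auto simp: canonical_hypergroup_def)

lemma zero_closed [simp]: "hzero R \<in> hcarrier R"
  using canonical by (auto simp: canonical_hypergroup_def)

lemma add_zero [simp]: "a \<in> hcarrier R \<Longrightarrow> hadd R a (hzero R) = {a}"
  using canonical by (auto simp: canonical_hypergroup_def)

lemma zero_add [simp]: "a \<in> hcarrier R \<Longrightarrow> hadd R (hzero R) a = {a}"
  using add_comm[of a "hzero R"] by simp

lemma neg_ex1: "a \<in> hcarrier R \<Longrightarrow> \<exists>!a'. a' \<in> hcarrier R \<and> hzero R \<in> hadd R a a'"
  using canonical unfolding canonical_hypergroup_def by (elim conjE) (erule bspec)

lemma add_reversible:
  "a \<in> hcarrier R \<Longrightarrow> b \<in> hcarrier R \<Longrightarrow> c \<in> hadd R a b \<Longrightarrow>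
    a \<in> hadd R c (hneg R b) \<and> b \<in> hadd R c (hneg R a)"
  using canonical add_closed unfolding canonical_hypergroup_def by (elim conjE) meson

lemma neg_closed [simp]: "a \<in> hcarrier R \<Longrightarrow> hneg R a \<in> hcarrier R"
  and add_neg: "a \<in> hcarrier R \<Longrightarrow> hzero R \<in> hadd R a (hneg R a)"
  unfolding hneg_def using theI'[OF neg_ex1] by blast+

lemma neg_unique: "a \<in> hcarrier R \<Longrightarrow> b \<in> hcarrier R \<Longrightarrow> hzero R \<in> hadd R a b \<Longrightarrow> b = hneg R a"
  using neg_ex1 neg_closed add_neg by blast

lemma neg_neg [simp]: "a \<in> hcarrier R \<Longrightarrow> hneg R (hneg R a) = a"
  using neg_unique[of "hneg R a" a] add_neg add_comm by simp

lemma neg_add: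
  assumes "a \<in> hcarrier R" "b \<in> hcarrier R" "c \<in> hadd R a b"
  shows "hneg R c \<in> hadd R (hneg R a) (hneg R b)"
proof -
  have c: "c \<in> hcarrier R" using assms add_closed by blast
  have "a \<in> hadd R c (hneg R b)" using add_reversible assms by blast
  then have "hneg R b \<in> hadd R a (hneg R c)" using add_reversible[OF c] assms(2) by simp
  then have "hneg R c \<in> hadd R (hneg R b) (hneg R a)" using add_reversible assms(1) c by simp
  then show ?thesis using add_comm assms by simp
qed

lemma mul_closed [simp]: "a \<in> hcarrier R \<Longrightarrow> b \<in> hcarrier R \<Longrightarrow> hmult R a b \<in> hcarrier R"
  using krasner by (auto simp: krasner_hyperring_def)

lemma mul_assoc:
  "a \<in> hcarrier R \<Longrightarrow> b \<in> hcarrier R \<Longrightarrow> c \<in> hcarrier R \<Longrightarrow>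
    hmult R (hmult R a b) c = hmult R a (hmult R b c)"
  using krasner by (auto simp: krasner_hyperring_def)

lemma mul_comm: "a \<in> hcarrier R \<Longrightarrow> b \<in> hcarrier R \<Longrightarrow> hmult R a b = hmult R b a"
  using krasner by (auto simp: krasner_hyperring_def)

lemma mul_left_commute:
  "a \<in> hcarrier R \<Longrightarrow> b \<in> hcarrier R \<Longrightarrow> c \<in> hcarrier R \<Longrightarrow>
    hmult R a (hmult R b c) = hmult R b (hmult R a c)"
  using mul_assoc mul_comm by metis

lemmas mul_ac = mul_assoc mul_comm mul_left_commute

lemma one_closed [simp]: "hone R \<in> hcarrier R"
  using krasner by (auto simp: krasner_hyperring_def)

lemma one_mul [simp]: "a \<in> hcarrier R \<Longrightarrow> hmult R (hone R) a = a"
  using krasner by (auto simp: krasner_hyperring_def)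

lemma mul_one [simp]: "a \<in> hcarrier R \<Longrightarrow> hmult R a (hone R) = a"
  using mul_comm[of a "hone R"] by simp

lemma zero_mul [simp]: "a \<in> hcarrier R \<Longrightarrow> hmult R (hzero R) a = hzero R"
  using krasner by (auto simp: krasner_hyperring_def)

lemma mul_zero [simp]: "a \<in> hcarrier R \<Longrightarrow> hmult R a (hzero R) = hzero R"
  using mul_comm[of a "hzero R"] by simp

lemma distrib:
  "a \<in> hcarrier R \<Longrightarrow> b \<in> hcarrier R \<Longrightarrow> c \<in> hcarrier R \<Longrightarrow> x \<in> hadd R b c \<Longrightarrow>
    hmult R a x \<in> hadd R (hmult R a b) (hmult R a c)"
  using krasner unfolding krasner_hyperring_def by (elim conjE) (metis imageI)

lemma mul_neg: "a \<in> hcarrier R \<Longrightarrow> b \<in> hcarrier R \<Longrightarrow> hmult R a (hneg R b) = hneg R (hmult R a b)"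
  using distrib[of a b "hneg R b" "hzero R"] add_neg neg_unique by simp

lemma neg_mul: "a \<in> hcarrier R \<Longrightarrow> b \<in> hcarrier R \<Longrightarrow> hmult R (hneg R a) b = hneg R (hmult R a b)"
  using mul_neg[of b a] mul_comm by simp

lemma ideal_closed: "hyperideal R N \<Longrightarrow> a \<in> N \<Longrightarrow> a \<in> hcarrier R"
  unfolding hyperideal_def by blast

lemma ideal_sub_closed: "hyperideal R N \<Longrightarrow> a \<in> N \<Longrightarrow> b \<in> N \<Longrightarrow> hadd R a (hneg R b) \<subseteq> N"
  unfolding hyperideal_def by blast

lemma ideal_zero: "hyperideal R N \<Longrightarrow> hzero R \<in> N"
proof -
  assume N: "hyperideal R N"
  then obtain a where "a \<in> N" unfolding hyperideal_def by blast
  then show ?thesis using add_neg ideal_closed ideal_sub_closed N by blast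
qed

lemma ideal_neg: "hyperideal R N \<Longrightarrow> b \<in> N \<Longrightarrow> hneg R b \<in> N"
  using ideal_sub_closed[OF _ ideal_zero] ideal_closed by fastforce

lemma ideal_add: "hyperideal R N \<Longrightarrow> a \<in> N \<Longrightarrow> b \<in> N \<Longrightarrow> c \<in> hadd R a b \<Longrightarrow> c \<in> N"
  using ideal_sub_closed[of N a "hneg R b"] ideal_neg ideal_closed by fastforce

lemma ideal_mult_left: "hyperideal R N \<Longrightarrow> r \<in> hcarrier R \<Longrightarrow> a \<in> N \<Longrightarrow> hmult R r a \<in> N"
  unfolding hyperideal_def by blast

lemma ideal_mult_right: "hyperideal R N \<Longrightarrow> r \<in> hcarrier R \<Longrightarrow> a \<in> N \<Longrightarrow> hmult R a r \<in> N"
  using ideal_mult_left ideal_closed mul_comm by metis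

lemma phi_prime_cancel:
  assumes T: "phi_prime R \<psi> T" and \<psi>: "\<psi> T = {} \<or> hyperideal R (\<psi> T)"
    and u: "u \<in> hcarrier R" "u \<notin> T" and c: "c \<in> hcarrier R"
    and uc: "hmult R u c \<in> T" "hmult R u c \<notin> \<psi> T"
  shows "c \<in> T \<and> c \<notin> \<psi> T"
proof
  show "c \<in> T" using T u c uc unfolding phi_prime_def by blast
  show "c \<notin> \<psi> T" using \<psi> ideal_mult_left[OF _ u(1)] uc(2) by blast
qed

subsection \<open>Cosets and the quotient R/M\<close>

lemma coset_iff: "x \<in> coset R M y \<longleftrightarrow> (\<exists>m\<in>M. x \<in> hadd R y m)"
  unfolding coset_def hadd_set_def by blast

context
  fixes M assumes M: "hyperideal R M"
begin

lemma coset_closed: "y \<in> hcarrier R \<Longrightarrow> x \<in> coset R M y \<Longrightarrow> x \<in> hcarrier R"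
  unfolding coset_iff using add_closed ideal_closed[OF M] by blast

lemma coset_self: "y \<in> hcarrier R \<Longrightarrow> y \<in> coset R M y"
  unfolding coset_iff using ideal_zero[OF M] by force

lemma coset_zero: "coset R M (hzero R) = M"
  using ideal_closed[OF M] by (auto simp: coset_iff)

lemma coset_subset_coset:
  assumes y: "y \<in> hcarrier R" and x: "x \<in> coset R M y"
  shows "coset R M x \<subseteq> coset R M y"
proof
  fix z assume "z \<in> coset R M x"
  then obtain m' where m': "m' \<in> M" "z \<in> hadd R x m'" using coset_iff by blast
  obtain m where m: "m \<in> M" "x \<in> hadd R y m" using x coset_iff by blast
  have "z \<in> (\<Union>x\<in>hadd R y m. hadd R x m')" using m m' by blast
  then obtain w where "w \<in> hadd R m m'" "z \<in> hadd R y w"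
    using add_assoc[OF y ideal_closed[OF M m(1)] ideal_closed[OF M m'(1)]] by blast
  then show "z \<in> coset R M y" using ideal_add[OF M m(1) m'(1)] coset_iff by blast
qed

lemma coset_sym:
  assumes y: "y \<in> hcarrier R" and x: "x \<in> coset R M y"
  shows "y \<in> coset R M x"
proof -
  obtain m where m: "m \<in> M" "x \<in> hadd R y m" using x coset_iff by blast
  then have "y \<in> hadd R x (hneg R m)" using add_reversible[OF y ideal_closed[OF M m(1)]] by blast
  then show ?thesis using ideal_neg[OF M m(1)] coset_iff by blast
qed

lemma coset_eq_iff:
  assumes "x \<in> hcarrier R" "y \<in> hcarrier R"
  shows "coset R M x = coset R M y \<longleftrightarrow> x \<in> coset R M y"
proof
  show "coset R M x = coset R M y \<Longrightarrow> x \<in> coset R M y" using coset_self assms by blast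
next
  assume "x \<in> coset R M y"
  then show "coset R M x = coset R M y"
    using coset_subset_coset coset_sym assms by (meson subset_antisym)
qed

lemma coset_subset_ideal:
  assumes T: "hyperideal R T" and "M \<subseteq> T" and a: "a \<in> T"
  shows "coset R M a \<subseteq> T"
proof
  fix x assume "x \<in> coset R M a"
  then obtain m where "m \<in> M" "x \<in> hadd R a m" using coset_iff by blast
  then show "x \<in> T" using ideal_add[OF T a] \<open>M \<subseteq> T\<close> by blast
qed

lemma coset_mult:
  assumes c: "c \<in> hcarrier R" and y: "y \<in> hcarrier R" and x: "x \<in> coset R M y"
  shows "hmult R c x \<in> coset R M (hmult R c y)"
proof -
  obtain m where m: "m \<in> M" "x \<in> hadd R y m" using x coset_iff by blast
  then have "hmult R c x \<in> hadd R (hmult R c y) (hmult R c m)"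
    using distrib[OF c y ideal_closed[OF M m(1)]] by blast
  then show ?thesis using ideal_mult_left[OF M c m(1)] coset_iff by blast
qed

lemma coset_neg:
  assumes y: "y \<in> hcarrier R" and x: "x \<in> coset R M y"
  shows "hneg R x \<in> coset R M (hneg R y)"
proof -
  obtain m where m: "m \<in> M" "x \<in> hadd R y m" using x coset_iff by blast
  then have "hneg R x \<in> hadd R (hneg R y) (hneg R m)"
    using neg_add[OF y ideal_closed[OF M m(1)]] by blast
  then show ?thesis using ideal_neg[OF M m(1)] coset_iff by blast
qed

lemma coset_mult_cong:
  assumes a: "a \<in> hcarrier R" "a' \<in> coset R M a" and b: "b \<in> hcarrier R" "b' \<in> coset R M b"
  shows "coset R M (hmult R a' b') = coset R M (hmult R a b)"
proof -
  have a': "a' \<in> hcarrier R" and b': "b' \<in> hcarrier R" using a b coset_closed by blast+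
  have "coset R M (hmult R a' b') = coset R M (hmult R a' b)"
    using coset_eq_iff coset_mult[OF a' b(1) b(2)] a' b b' by simp
  also have "\<dots> = coset R M (hmult R b a)"
    using coset_eq_iff coset_mult[OF b(1) a] mul_comm a a' b by simp
  finally show ?thesis using mul_comm a b by simp
qed

lemma quot_mult:
  assumes a: "a \<in> hcarrier R" and b: "b \<in> hcarrier R"
  shows "hmult (quot R M) (coset R M a) (coset R M b) = coset R M (hmult R a b)"
  unfolding quot_def hyperring.select_convs
proof (rule the_equality)
  fix Z assume "\<exists>a' b'. a' \<in> hcarrier R \<and> b' \<in> hcarrier R \<and> coset R M a = coset R M a' \<and>
      coset R M b = coset R M b' \<and> Z = coset R M (hmult R a' b')"
  then obtain a' b' where "a' \<in> hcarrier R" "b' \<in> hcarrier R" "coset R M a' = coset R M a"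
      "coset R M b' = coset R M b" "Z = coset R M (hmult R a' b')"
    by metis
  then show "Z = coset R M (hmult R a b)" using coset_mult_cong coset_eq_iff a b by simp
qed (use a b in blast)

lemma quot_neg:
  assumes b: "b \<in> hcarrier R"
  shows "hneg (quot R M) (coset R M b) = coset R M (hneg R b)"
proof (rule hneg_eqI)
  show "hzero (quot R M) \<in> hadd (quot R M) (coset R M b) (coset R M (hneg R b))"
    unfolding quot_add quot_zero using b add_neg neg_closed by blast
next
  fix Y assume "hzero (quot R M) \<in> hadd (quot R M) (coset R M b) Y"
  then obtain w y z where w: "coset R M w = coset R M (hzero R)" "y \<in> hcarrier R" "z \<in> hcarrier R"
    "coset R M y = coset R M b" "Y = coset R M z" "w \<in> hadd R y z"
    unfolding quot_add quot_zero by auto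
  have wC: "w \<in> hcarrier R" using add_closed w by blast
  then have "w \<in> coset R M (hzero R)" using w(1) coset_eq_iff by blast
  then have wM: "w \<in> M" using coset_zero by simp
  have "z \<in> hadd R w (hneg R y)" using add_reversible[OF w(2,3,6)] by blast
  then have "z \<in> hadd R (hneg R y) w" using add_comm[OF wC] w(2) by simp
  then have "z \<in> coset R M (hneg R y)" using wM coset_iff by blast
  then have "coset R M z = coset R M (hneg R y)" using coset_eq_iff w(2,3) by simp
  also have "\<dots> = coset R M (hneg R b)"
    using coset_neg[OF b] coset_eq_iff w(2,4) b by simp
  finally show "Y = coset R M (hneg R b)" using w(5) by simp
qed (use b in auto)

lemma coset_in_quot_ideal_iff:
  assumes T: "hyperideal R T" "M \<subseteq> T" and x: "x \<in> hcarrier R"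
  shows "coset R M x \<in> quot_ideal R T M \<longleftrightarrow> x \<in> T"
proof
  assume "coset R M x \<in> quot_ideal R T M"
  then obtain t where "t \<in> T" "coset R M x = coset R M t" unfolding quot_ideal_def by blast
  then show "x \<in> T" using coset_eq_iff[OF x] ideal_closed[OF T(1)] coset_subset_ideal[OF T] by blast
qed (simp add: quot_ideal_def)

lemma hyperideal_quot_ideal:
  assumes T: "hyperideal R T" "M \<subseteq> T"
  shows "hyperideal (quot R M) (quot_ideal R T M)"
proof (rule hyperidealI)
  show "quot_ideal R T M \<subseteq> hcarrier (quot R M)"
    unfolding quot_ideal_def using ideal_closed[OF T(1)] by auto
  show "quot_ideal R T M \<noteq> {}" unfolding quot_ideal_def using ideal_zero[OF T(1)] by blast
next
  fix X Y assume "X \<in> quot_ideal R T M" "Y \<in> quot_ideal R T M"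
  then obtain a b where ab: "a \<in> T" "b \<in> T" "X = coset R M a" "Y = coset R M b"
    unfolding quot_ideal_def by blast
  show "hadd (quot R M) X Y \<subseteq> quot_ideal R T M"
  proof
    fix W assume "W \<in> hadd (quot R M) X Y"
    then obtain c a' b' where c: "W = coset R M c" "a' \<in> hcarrier R" "b' \<in> hcarrier R"
      "coset R M a = coset R M a'" "coset R M b = coset R M b'" "c \<in> hadd R a' b'"
      unfolding quot_add ab by blast
    have "a' \<in> T" "b' \<in> T" using coset_in_quot_ideal_iff[OF T] c ab by (auto simp: quot_ideal_def)
    then have "c \<in> T" using ideal_add[OF T(1)] c(6) by blast
    then show "W \<in> quot_ideal R T M" unfolding quot_ideal_def c(1) by blast
  qed
next
  fix Y assume "Y \<in> quot_ideal R T M"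
  then obtain b where "b \<in> T" "Y = coset R M b" unfolding quot_ideal_def by blast
  then show "hneg (quot R M) Y \<in> quot_ideal R T M"
    using quot_neg ideal_neg[OF T(1)] ideal_closed[OF T(1)] unfolding quot_ideal_def by simp
next
  fix r X assume "r \<in> hcarrier (quot R M)" "X \<in> quot_ideal R T M"
  then obtain c a where "c \<in> hcarrier R" "a \<in> T" "r = coset R M c" "X = coset R M a"
    unfolding quot_ideal_def by auto
  then show "hmult (quot R M) r X \<in> quot_ideal R T M"
    using quot_mult ideal_mult_left[OF T(1)] ideal_closed[OF T(1)] unfolding quot_ideal_def by simp
qed

lemma phi_quot_quot_ideal:
  assumes T: "hyperideal R T" "M \<subseteq> T"
  shows "phi_quot R \<phi> M (quot_ideal R T M) =
    (if \<phi> T = {} then {} else quot_ideal R (hadd_set R (\<phi> T) M) M)"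
proof -
  have "{x \<in> hcarrier R. coset R M x \<in> quot_ideal R T M} = T"
    using coset_in_quot_ideal_iff[OF T] ideal_closed[OF T(1)] by blast
  then show ?thesis unfolding phi_quot_def Let_def by simp
qed

lemma phi_prime_quot_ideal:
  assumes T: "phi_prime R \<phi> T" and MT: "M \<subseteq> T"
  shows "phi_prime (quot R M) (phi_quot R \<phi> M) (quot_ideal R T M)"
proof -
  have T_ideal: "hyperideal R T" using T unfolding phi_prime_def by blast
  have "X \<in> quot_ideal R T M \<or> Y \<in> quot_ideal R T M"
    if X: "X \<in> hcarrier (quot R M)" and Y: "Y \<in> hcarrier (quot R M)"
      and XY: "hmult (quot R M) X Y \<in> quot_ideal R T M"
        "hmult (quot R M) X Y \<notin> phi_quot R \<phi> M (quot_ideal R T M)" for X Y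
  proof -
    obtain a b where ab: "a \<in> hcarrier R" "b \<in> hcarrier R" "X = coset R M a" "Y = coset R M b"
      using X Y by auto
    then have XY_eq: "hmult (quot R M) X Y = coset R M (hmult R a b)" using quot_mult by simp
    have "hmult R a b \<in> T"
      using XY(1) coset_in_quot_ideal_iff[OF T_ideal MT] ab XY_eq by simp
    moreover have "hmult R a b \<notin> \<phi> T"
    proof
      assume ab_phi: "hmult R a b \<in> \<phi> T"
      then have "hmult R a b \<in> hadd_set R (\<phi> T) M"
        unfolding hadd_set_def using ideal_zero[OF M] ab by force
      then have "coset R M (hmult R a b) \<in> quot_ideal R (hadd_set R (\<phi> T) M) M"
        unfolding quot_ideal_def by blast
      then have "coset R M (hmult R a b) \<in> phi_quot R \<phi> M (quot_ideal R T M)"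
        unfolding phi_quot_quot_ideal[OF T_ideal MT] using ab_phi by auto
      then show False using XY(2) XY_eq by simp
    qed
    ultimately have "a \<in> T \<or> b \<in> T" using T ab unfolding phi_prime_def by blast
    then show ?thesis unfolding quot_ideal_def ab by blast
  qed
  then show ?thesis
    unfolding phi_prime_def using hyperideal_quot_ideal[OF T_ideal MT] by blast
qed

end

subsection \<open>Fractions and the localization R_S\<close>

context
  fixes S assumes S: "mult_closed R S"
begin

lemma mult_closed_carrier: "s \<in> S \<Longrightarrow> s \<in> hcarrier R"
  and one_in_mult_closed [simp]: "hone R \<in> S"
  and mult_in_mult_closed [simp]: "s \<in> S \<Longrightarrow> t \<in> S \<Longrightarrow> hmult R s t \<in> S"
  using S unfolding mult_closed_def by blast+

text \<open>Transitivity of the relation defining fractions, with witness u \<circ> v \<circ> s.\<close>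

lemma frac_subset:
  assumes a: "a \<in> hcarrier R" and b: "b \<in> hcarrier R" and s: "s \<in> S" and t: "t \<in> S"
    and u: "u \<in> S" and e: "hmult R u (hmult R a t) = hmult R u (hmult R b s)"
  shows "frac R S a s \<subseteq> frac R S b t"
proof
  fix p assume "p \<in> frac R S a s"
  then obtain c r v where p: "p = (c, r)" "c \<in> hcarrier R" "r \<in> S" "v \<in> S"
    and v: "hmult R v (hmult R a r) = hmult R v (hmult R c s)"
    unfolding frac_def by blast
  have C: "s \<in> hcarrier R" "t \<in> hcarrier R" "u \<in> hcarrier R" "v \<in> hcarrier R" "r \<in> hcarrier R"
    using mult_closed_carrier s t u p by auto
  have "hmult R (hmult R u (hmult R v s)) (hmult R b r) = hmult R (hmult R v r) (hmult R u (hmult R b s))"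
    using C a b by (simp add: mul_ac)
  also have "\<dots> = hmult R (hmult R v r) (hmult R u (hmult R a t))" using e by simp
  also have "\<dots> = hmult R (hmult R u t) (hmult R v (hmult R a r))" using C a by (simp add: mul_ac)
  also have "\<dots> = hmult R (hmult R u t) (hmult R v (hmult R c s))" using v by simp
  also have "\<dots> = hmult R (hmult R u (hmult R v s)) (hmult R c t)" using C p by (simp add: mul_ac)
  finally show "p \<in> frac R S b t"
    unfolding frac_def using p u v s by auto
qed

lemma frac_eq_iff:
  assumes "a \<in> hcarrier R" "b \<in> hcarrier R" "s \<in> S" "t \<in> S"
  shows "frac R S a s = frac R S b t \<longleftrightarrow> (\<exists>u\<in>S. hmult R u (hmult R a t) = hmult R u (hmult R b s))"
proof
  assume "frac R S a s = frac R S b t"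
  moreover have "(b, t) \<in> frac R S b t" unfolding frac_def using assms by force
  ultimately show "\<exists>u\<in>S. hmult R u (hmult R a t) = hmult R u (hmult R b s)"
    unfolding frac_def by blast
next
  assume "\<exists>u\<in>S. hmult R u (hmult R a t) = hmult R u (hmult R b s)"
  then show "frac R S a s = frac R S b t"
    using frac_subset assms by (metis subset_antisym)
qed

lemma frac_cancel:
  assumes "k \<in> S" "a \<in> hcarrier R" "s \<in> S"
  shows "frac R S (hmult R k a) (hmult R k s) = frac R S a s"
  using assms mult_closed_carrier by (subst frac_eq_iff) (auto intro!: bexI[of _ "hone R"] simp: mul_ac)

lemma frac_neg_cong:
  assumes a: "a \<in> hcarrier R" and b: "b \<in> hcarrier R" and s: "s \<in> S" and t: "t \<in> S"
    and e: "frac R S a s = frac R S b t"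
  shows "frac R S (hneg R a) s = frac R S (hneg R b) t"
proof -
  obtain u where u: "u \<in> S" "hmult R u (hmult R a t) = hmult R u (hmult R b s)"
    using e frac_eq_iff[OF a b s t] by blast
  then have "hmult R u (hmult R (hneg R a) t) = hmult R u (hmult R (hneg R b) s)"
    using a b s t mult_closed_carrier by (simp add: neg_mul mul_neg)
  then show ?thesis using frac_eq_iff a b s t u(1) by auto
qed

lemma frac_mult_cong:
  assumes a: "a \<in> hcarrier R" "a' \<in> hcarrier R" and b: "b \<in> hcarrier R" "b' \<in> hcarrier R"
    and st: "s \<in> S" "s' \<in> S" "t \<in> S" "t' \<in> S"
    and e: "frac R S a s = frac R S a' s'" "frac R S b t = frac R S b' t'"
  shows "frac R S (hmult R a b) (hmult R s t) = frac R S (hmult R a' b') (hmult R s' t')"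
proof -
  obtain u where u: "u \<in> S" "hmult R u (hmult R a s') = hmult R u (hmult R a' s)"
    using e(1) frac_eq_iff a st by blast
  obtain v where v: "v \<in> S" "hmult R v (hmult R b t') = hmult R v (hmult R b' t)"
    using e(2) frac_eq_iff b st by blast
  have C: "s \<in> hcarrier R" "s' \<in> hcarrier R" "t \<in> hcarrier R" "t' \<in> hcarrier R"
    "u \<in> hcarrier R" "v \<in> hcarrier R"
    using mult_closed_carrier st u v by auto
  have "hmult R (hmult R u v) (hmult R (hmult R a b) (hmult R s' t')) =
      hmult R (hmult R u (hmult R a s')) (hmult R v (hmult R b t'))"
    using C a b by (simp add: mul_ac)
  also have "\<dots> = hmult R (hmult R u v) (hmult R (hmult R a' b') (hmult R s t))"
    using u v C a b by (simp add: mul_ac)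
  finally have "hmult R (hmult R u v) (hmult R (hmult R a b) (hmult R s' t')) =
      hmult R (hmult R u v) (hmult R (hmult R a' b') (hmult R s t))" .
  moreover have "hmult R u v \<in> S" using u v by simp
  ultimately show ?thesis
    using frac_eq_iff[OF mul_closed[OF a(1) b(1)] mul_closed[OF a(2) b(2)]] st by simp blast
qed

lemma loc_mult:
  assumes "a \<in> hcarrier R" "b \<in> hcarrier R" "s \<in> S" "t \<in> S"
  shows "hmult (localization R S) (frac R S a s) (frac R S b t) = frac R S (hmult R a b) (hmult R s t)"
  unfolding localization_def hyperring.select_convs
proof (rule the_equality)
  fix Z assume "\<exists>a' b' s' t'. a' \<in> hcarrier R \<and> b' \<in> hcarrier R \<and> s' \<in> S \<and> t' \<in> S \<and>
      frac R S a s = frac R S a' s' \<and> frac R S b t = frac R S b' t' \<and>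
      Z = frac R S (hmult R a' b') (hmult R s' t')"
  then show "Z = frac R S (hmult R a b) (hmult R s t)"
    using frac_mult_cong assms by metis
qed (use assms in blast)

lemma loc_neg:
  assumes b: "b \<in> hcarrier R" and t: "t \<in> S"
  shows "hneg (localization R S) (frac R S b t) = frac R S (hneg R b) t"
proof (rule hneg_eqI)
  have tC: "t \<in> hcarrier R" using mult_closed_carrier t .
  have "frac R S (hzero R) (hmult R t t) = frac R S (hzero R) (hone R)"
    using frac_cancel[of "hmult R t t" "hzero R" "hone R"] t tC by simp
  moreover have "hzero R \<in> hadd R (hmult R b t) (hmult R (hneg R b) t)"
    using add_neg neg_mul b tC by simp
  ultimately show "hzero (localization R S) \<in>
      hadd (localization R S) (frac R S b t) (frac R S (hneg R b) t)"
    unfolding loc_add loc_zero using b t neg_closed by blast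
next
  fix Y assume "hzero (localization R S) \<in> hadd (localization R S) (frac R S b t) Y"
  then obtain c a' b' s' t' where q: "frac R S c (hmult R s' t') = frac R S (hzero R) (hone R)"
      "a' \<in> hcarrier R" "b' \<in> hcarrier R" "s' \<in> S" "t' \<in> S"
      "frac R S b t = frac R S a' s'" "Y = frac R S b' t'" "c \<in> hadd R (hmult R a' t') (hmult R b' s')"
    unfolding loc_add loc_zero by auto
  have C: "s' \<in> hcarrier R" "t' \<in> hcarrier R" using mult_closed_carrier q by auto
  have cC: "c \<in> hcarrier R" using add_closed q C by (meson mul_closed)
  obtain u where u: "u \<in> S" "hmult R u c = hzero R"
    using q(1) frac_eq_iff[OF cC zero_closed _ one_in_mult_closed] q C cC mult_closed_carrier
    by auto
  have uC: "u \<in> hcarrier R" using mult_closed_carrier u(1) .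
  have "hzero R \<in> hadd R (hmult R u (hmult R a' t')) (hmult R u (hmult R b' s'))"
    using distrib[OF uC _ _ q(8)] u(2) q C by simp
  then have "hmult R u (hmult R b' s') = hmult R u (hmult R (hneg R a') t')"
    using neg_unique neg_mul mul_neg uC q C by simp
  then have "frac R S b' t' = frac R S (hneg R a') s'"
    using frac_eq_iff q C u(1) by auto
  also have "\<dots> = frac R S (hneg R b) t"
    using frac_neg_cong q b t by metis
  finally show "Y = frac R S (hneg R b) t" using q(7) by simp
qed (use b t in force)

lemma frac_in_loc_ideal:
  "u \<in> S \<Longrightarrow> a \<in> hcarrier R \<Longrightarrow> s \<in> S \<Longrightarrow> hmult R u a \<in> N \<Longrightarrow> frac R S a s \<in> loc_ideal R S N"
  unfolding loc_ideal_def using frac_cancel[symmetric] by fastforce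

lemma frac_in_loc_ideal_iff:
  assumes N: "hyperideal R N" and a: "a \<in> hcarrier R" and s: "s \<in> S"
  shows "frac R S a s \<in> loc_ideal R S N \<longleftrightarrow> (\<exists>u\<in>S. hmult R u a \<in> N)"
proof
  assume "frac R S a s \<in> loc_ideal R S N"
  then obtain d r where d: "d \<in> N" "r \<in> S" "frac R S a s = frac R S d r"
    unfolding loc_ideal_def by blast
  then obtain v where v: "v \<in> S" "hmult R v (hmult R a r) = hmult R v (hmult R d s)"
    using frac_eq_iff a s ideal_closed[OF N] by blast
  have "hmult R (hmult R v r) a = hmult R v (hmult R d s)"
    using v a d mult_closed_carrier by (simp add: mul_ac)
  then have "hmult R (hmult R v r) a \<in> N"
    using ideal_mult_left[OF N] ideal_mult_right[OF N] d v s mult_closed_carrier by simp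
  then show "\<exists>u\<in>S. hmult R u a \<in> N" using v d mult_in_mult_closed by blast
qed (use frac_in_loc_ideal a s in blast)

lemma hyperideal_loc_ideal:
  assumes N: "hyperideal R N"
  shows "hyperideal (localization R S) (loc_ideal R S N)"
proof (rule hyperidealI)
  show "loc_ideal R S N \<subseteq> hcarrier (localization R S)"
    unfolding loc_ideal_def loc_carrier using ideal_closed[OF N] by blast
  show "loc_ideal R S N \<noteq> {}"
    unfolding loc_ideal_def using ideal_zero[OF N] one_in_mult_closed by blast
next
  fix X Y assume XY: "X \<in> loc_ideal R S N" "Y \<in> loc_ideal R S N"
  show "hadd (localization R S) X Y \<subseteq> loc_ideal R S N"
  proof
    fix W assume "W \<in> hadd (localization R S) X Y"
    then obtain c a b s t where q: "W = frac R S c (hmult R s t)"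
        "a \<in> hcarrier R" "b \<in> hcarrier R" "s \<in> S" "t \<in> S"
        "X = frac R S a s" "Y = frac R S b t" "c \<in> hadd R (hmult R a t) (hmult R b s)"
      unfolding loc_add by blast
    obtain u where u: "u \<in> S" "hmult R u a \<in> N"
      using XY(1) frac_in_loc_ideal_iff[OF N q(2,4)] q(6) by blast
    obtain v where v: "v \<in> S" "hmult R v b \<in> N"
      using XY(2) frac_in_loc_ideal_iff[OF N q(3,5)] q(7) by blast
    have C: "s \<in> hcarrier R" "t \<in> hcarrier R" "u \<in> hcarrier R" "v \<in> hcarrier R"
      using mult_closed_carrier q u v by auto
    have uv: "hmult R u v \<in> S" using u v by simp
    have c: "c \<in> hcarrier R" using add_closed[OF _ _ q(8)] q C by simp
    have "hmult R (hmult R u v) c \<in>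
        hadd R (hmult R (hmult R u v) (hmult R a t)) (hmult R (hmult R u v) (hmult R b s))"
      using distrib[OF _ _ _ q(8)] q C by simp
    moreover have "hmult R (hmult R u v) (hmult R a t) = hmult R (hmult R v t) (hmult R u a)"
      and "hmult R (hmult R u v) (hmult R b s) = hmult R (hmult R u s) (hmult R v b)"
      using q C by (simp_all add: mul_ac)
    moreover have "hmult R (hmult R v t) (hmult R u a) \<in> N"
      and "hmult R (hmult R u s) (hmult R v b) \<in> N"
      using ideal_mult_left[OF N] u(2) v(2) C by simp_all
    ultimately have "hmult R (hmult R u v) c \<in> N" using ideal_add[OF N] by metis
    then show "W \<in> loc_ideal R S N"
      using frac_in_loc_ideal[OF uv c] q(1,4,5) by simp
  qed
next
  fix Y assume "Y \<in> loc_ideal R S N"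
  then obtain b t where b: "b \<in> N" "t \<in> S" "Y = frac R S b t" unfolding loc_ideal_def by blast
  then have "hneg (localization R S) Y = frac R S (hneg R b) t"
    using loc_neg ideal_closed[OF N] by simp
  then show "hneg (localization R S) Y \<in> loc_ideal R S N"
    using ideal_neg[OF N b(1)] b(2) unfolding loc_ideal_def by blast
next
  fix r X assume "r \<in> hcarrier (localization R S)" "X \<in> loc_ideal R S N"
  then obtain c w a s where q: "c \<in> hcarrier R" "w \<in> S" "a \<in> N" "s \<in> S"
      "r = frac R S c w" "X = frac R S a s"
    unfolding loc_ideal_def loc_carrier by blast
  then have "hmult (localization R S) r X = frac R S (hmult R c a) (hmult R w s)"
    using loc_mult ideal_closed[OF N] by simp
  then show "hmult (localization R S) r X \<in> loc_ideal R S N"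
    using ideal_mult_left[OF N q(1,3)] mult_in_mult_closed[OF q(2,4)]
    unfolding loc_ideal_def by blast
qed

lemma phi_prime_loc_ideal:
  assumes \<phi>: "phi_function R \<phi>" and T: "phi_prime R \<phi> T" and TS: "T \<inter> S = {}"
    and phi_T: "loc_ideal R S (\<phi> T) \<subseteq> phi_loc R \<phi> S (loc_ideal R S T)"
  shows "phi_prime (localization R S) (phi_loc R \<phi> S) (loc_ideal R S T)"
proof -
  have T_ideal: "hyperideal R T" using T unfolding phi_prime_def by blast
  have "X \<in> loc_ideal R S T \<or> Y \<in> loc_ideal R S T"
    if X: "X \<in> hcarrier (localization R S)" and Y: "Y \<in> hcarrier (localization R S)"
      and XY: "hmult (localization R S) X Y \<in> loc_ideal R S T"
        "hmult (localization R S) X Y \<notin> phi_loc R \<phi> S (loc_ideal R S T)" for X Y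
  proof -
    obtain a b s t where q: "a \<in> hcarrier R" "b \<in> hcarrier R" "s \<in> S" "t \<in> S"
        "X = frac R S a s" "Y = frac R S b t"
      using X Y unfolding loc_carrier by blast
    have ab: "hmult R a b \<in> hcarrier R" and st: "hmult R s t \<in> S" using q by simp_all
    have XY_eq: "hmult (localization R S) X Y = frac R S (hmult R a b) (hmult R s t)"
      using loc_mult q by simp
    then obtain u where u: "u \<in> S" "hmult R u (hmult R a b) \<in> T"
      using XY(1) frac_in_loc_ideal_iff[OF T_ideal ab st] by auto
    have "hmult R u (hmult R a b) \<notin> \<phi> T"
    proof
      assume "hmult R u (hmult R a b) \<in> \<phi> T"
      then have "frac R S (hmult R a b) (hmult R s t) \<in> loc_ideal R S (\<phi> T)"
        using frac_in_loc_ideal[OF u(1) ab st] by simp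
      then show False using phi_T XY(2) XY_eq by auto
    qed
    moreover have "\<phi> T = {} \<or> hyperideal R (\<phi> T)" using \<phi> T_ideal unfolding phi_function_def by blast
    moreover have "u \<notin> T" using u(1) TS by blast
    ultimately have "hmult R a b \<in> T \<and> hmult R a b \<notin> \<phi> T"
      using phi_prime_cancel[OF T _ mult_closed_carrier[OF u(1)] _ ab u(2)] by blast
    then have "a \<in> T \<or> b \<in> T" using T q(1,2) unfolding phi_prime_def by blast
    then show ?thesis unfolding loc_ideal_def q(5,6) using q(3,4) by blast
  qed
  then show ?thesis
    unfolding phi_prime_def using hyperideal_loc_ideal[OF T_ideal] by blast
qed

end

end

theorem mainTheorem10:
  fixes R :: "'a hyperring" and \<phi> :: "'a set \<Rightarrow> 'a set" and T :: "'a set"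
  assumes "krasner_hyperring R"
    and "phi_function R \<phi>"
    and "phi_prime R \<phi> T"
    and "T \<noteq> hcarrier R"
  shows "(\<forall>M. hyperideal R M \<and> M \<subseteq> T \<longrightarrow>
            phi_prime (quot R M) (phi_quot R \<phi> M) (quot_ideal R T M))
       \<and> (\<forall>S. mult_closed R S \<and> T \<inter> S = {} \<and>
            loc_ideal R S (\<phi> T) \<subseteq> phi_loc R \<phi> S (loc_ideal R S T) \<longrightarrow>
            phi_prime (localization R S) (phi_loc R \<phi> S) (loc_ideal R S T))"
proof -
  interpret krasner R by (rule krasner.intro) fact
  show ?thesis
  proof (intro conjI allI impI)
    fix M assume "hyperideal R M \<and> M \<subseteq> T"
    then show "phi_prime (quot R M) (phi_quot R \<phi> M) (quot_ideal R T M)"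
      using phi_prime_quot_ideal assms(3) by blast
  next
    fix S assume "mult_closed R S \<and> T \<inter> S = {} \<and>
      loc_ideal R S (\<phi> T) \<subseteq> phi_loc R \<phi> S (loc_ideal R S T)"
    then show "phi_prime (localization R S) (phi_loc R \<phi> S) (loc_ideal R S T)"
      using phi_prime_loc_ideal assms(2,3) by blast
  qed
qed

end
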